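(* For every $\varepsilon>0$ there is $n_0$ such that for all $n\ge n_0$, $f(n)\le 2n^{6+\varepsilon}$. (That is, $f(n)\le 2n^{6+o(1)}$ for $n$ sufficiently large.)
   Context: For $n\ge 1$, $A_n$ denotes the finite integral symmetric relation algebra with atoms $1'$, $r$, $b_1,\dots,b_n$, all symmetric, in which a diversity cycle $xyz$ is mandatory (i.e. $x;y\ge z$) if and only if it involves $r$, and forbidden (i.e. $x;y\cdot z=0$) otherwise. A representation over a set $U$ is an embedding into the full relation algebra on $U\times U$. $\operatorname{Spec}(A)$ is the set of cardinals $\alpha\le\omega$ such that $A$ has a representation over a set of cardinality $\alpha$, and $f(n)=\min\operatorname{Spec}(A_n)$. *)

theory Defs
  imports Complex_Main "HOL-Library.Extended_Nat"
begin

datatype atom = One | Red | Blue nat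

definition atoms :: "nat \<Rightarrow> atom set" where
  "atoms n = {One, Red} \<union> Blue ` {1..n}"

text \<open>le_comp x y z  means  z \<le> x;y  in A_n (all atoms symmetric).
  Identity rules, and for diversity atoms: a cycle xyz is mandatory iff it involves r,
  forbidden otherwise.\<close>
definition le_comp :: "atom \<Rightarrow> atom \<Rightarrow> atom \<Rightarrow> bool" where
  "le_comp x y z =
     (if x = One then z = y
      else if y = One then z = x
      else if z = One then x = y
      else (x = Red \<or> y = Red \<or> z = Red))"

text \<open>A representation of A_n over U: an embedding into the full relation algebra on U \<times> U,
  determined by the images of the atoms: nonempty, pairwise disjoint relations covering U \<times> U,
  identity atom sent to the identity on U, converse preserved, composition preserved.\<close>
definition is_rep :: "nat \<Rightarrow> 'u set \<Rightarrow> (atom \<Rightarrow> ('u \<times> 'u) set) \<Rightarrow> bool" where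
  "is_rep n U R \<longleftrightarrow>
     (\<forall>a\<in>atoms n. R a \<noteq> {} \<and> R a \<subseteq> U \<times> U) \<and>
     (\<forall>a\<in>atoms n. \<forall>b\<in>atoms n. a \<noteq> b \<longrightarrow> R a \<inter> R b = {}) \<and>
     (\<Union>a\<in>atoms n. R a) = U \<times> U \<and>
     R One = Id_on U \<and>
     (\<forall>a\<in>atoms n. (R a)\<inverse> = R a) \<and>
     (\<forall>x\<in>atoms n. \<forall>y\<in>atoms n.
        R x O R y = (\<Union>z\<in>{z\<in>atoms n. le_comp x y z}. R z))"

text \<open>Spec(A_n): cardinals \<le> \<omega> of sets carrying a representation (sets of size \<le> \<omega> are
  taken, w.l.o.g., as subsets of nat; \<omega> is rendered as \<infinity>).\<close>
definition Spec :: "nat \<Rightarrow> enat set" where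
  "Spec n = {\<alpha>. \<exists>(U::nat set) R. is_rep n U R \<and>
                  (if finite U then \<alpha> = enat (card U) else \<alpha> = \<infinity>)}"

definition f :: "nat \<Rightarrow> enat" where
  "f n = Inf (Spec n)"

end

(*
  The points of the representation are the 3s-subsets of a (6s-1)-set, so any two of them meet.
  A pair is red if the two sets share more than s points; otherwise it gets one of the colours
  b_1, ..., b_n, chosen uniformly at random. Three sets pairwise sharing at most s points would
  cover 9s - 3s = 6s points, so there is no blue triangle and every triangle is an allowed cycle.
  Red-red paths exist deterministically, and each remaining mandatory cycle (r b_i b_j and
  b_i b_j r) can be completed through at least C(2s-1, s) ~ 4^s middle points, each of which
  works independently with probability at least 1/n^2. By the union bound some colouring
  completes all of them once n^2 |V|^2 (1 - 1/n^2)^C(2s-1,s) < 1/2. Taking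
  s = ceil((1 + e/12) log_2 n) gives 4^s/n^2 >= n^(e/6) and |V| < 2^(6s) <= 64 n^(6 + e/2),
  hence f(n) <= |V| <= 2 n^(6+e) for large n.
*)

theory Submission
  imports Defs "HOL-Library.FuncSet" "HOL-Library.Disjoint_Sets" "HOL-Real_Asymp.Real_Asymp"
begin

section \<open>Counting functions that avoid patterns\<close>

lemma card_fibre_override_on_eq:
  assumes closed: "\<And>h \<psi>. h \<in> S \<Longrightarrow> \<psi> \<in> PiE D K \<Longrightarrow> override_on h \<psi> D \<in> S"
    and \<psi>: "\<psi>1 \<in> PiE D K" "\<psi>2 \<in> PiE D K"
  shows "card {h \<in> S. \<forall>x\<in>D. h x = \<psi>1 x} = card {h \<in> S. \<forall>x\<in>D. h x = \<psi>2 x}"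
proof (rule bij_betw_same_card, rule bij_betw_byWitness[where f' = "\<lambda>h. override_on h \<psi>1 D"])
  show "\<forall>h\<in>{h \<in> S. \<forall>x\<in>D. h x = \<psi>1 x}. override_on (override_on h \<psi>2 D) \<psi>1 D = h"
    "\<forall>h\<in>{h \<in> S. \<forall>x\<in>D. h x = \<psi>2 x}. override_on (override_on h \<psi>1 D) \<psi>2 D = h"
    by (auto simp: override_on_def)
  show "(\<lambda>h. override_on h \<psi>2 D) ` {h \<in> S. \<forall>x\<in>D. h x = \<psi>1 x} \<subseteq> {h \<in> S. \<forall>x\<in>D. h x = \<psi>2 x}"
    "(\<lambda>h. override_on h \<psi>1 D) ` {h \<in> S. \<forall>x\<in>D. h x = \<psi>2 x} \<subseteq> {h \<in> S. \<forall>x\<in>D. h x = \<psi>1 x}"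
    using closed \<psi> by (auto simp: override_on_def)
qed

lemma card_eq_card_fibre_mult:
  assumes S: "S \<subseteq> PiE E (\<lambda>_. K)" "finite S" and K: "finite K" and D: "D \<subseteq> E" "finite D"
    and closed: "\<And>h \<psi>. h \<in> S \<Longrightarrow> \<psi> \<in> PiE D (\<lambda>_. K) \<Longrightarrow> override_on h \<psi> D \<in> S"
    and \<psi>0: "\<psi>0 \<in> PiE D (\<lambda>_. K)"
  shows "card S = card K ^ card D * card {h \<in> S. \<forall>x\<in>D. h x = \<psi>0 x}"
proof -
  let ?T = "\<lambda>\<psi>. {h \<in> S. \<forall>x\<in>D. h x = \<psi> x}"
  have "S = (\<Union>\<psi>\<in>PiE D (\<lambda>_. K). ?T \<psi>)"
  proof (intro equalityI subsetI)
    fix h assume "h \<in> S"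
    moreover have "restrict h D \<in> PiE D (\<lambda>_. K)"
      using \<open>h \<in> S\<close> S(1) D(1) by (auto simp: PiE_iff)
    moreover have "h \<in> ?T (restrict h D)"
      using \<open>h \<in> S\<close> by simp
    ultimately show "h \<in> (\<Union>\<psi>\<in>PiE D (\<lambda>_. K). ?T \<psi>)"
      by blast
  qed auto
  also have "card \<dots> = (\<Sum>\<psi>\<in>PiE D (\<lambda>_. K). card (?T \<psi>))"
    using S(2) K D(2) by (intro card_UN_disjoint) (auto simp: finite_PiE PiE_ext)
  also have "\<dots> = (\<Sum>\<psi>\<in>PiE D (\<lambda>_. K). card (?T \<psi>0))"
    using card_fibre_override_on_eq[OF closed _ \<psi>0] by (intro sum.cong) auto
  finally show ?thesis
    using D(2) by (simp add: card_PiE)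
qed

text \<open>For disjoint blocks \<open>D w\<close>, a uniformly random \<open>h\<close> avoids each pattern \<open>\<phi> w\<close>
  independently, with probability \<open>1 - 1 / card K ^ d\<close>.\<close>
lemma card_PiE_avoiding_patterns:
  fixes E :: "'e set" and K :: "'k set" and W :: "'w set"
  assumes E: "finite E" and K: "finite K" "K \<noteq> {}" and W: "finite W"
    and blocks: "\<And>w. w \<in> W \<Longrightarrow> D w \<subseteq> E" "\<And>w. w \<in> W \<Longrightarrow> card (D w) = d"
    and disj: "disjoint_family_on D W"
    and pattern: "\<And>w x. w \<in> W \<Longrightarrow> x \<in> D w \<Longrightarrow> \<phi> w x \<in> K"
  shows "real (card {h \<in> PiE E (\<lambda>_. K). \<forall>w\<in>W. \<exists>x\<in>D w. h x \<noteq> \<phi> w x})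
         = real (card K) ^ card E * (1 - 1 / real (card K) ^ d) ^ card W"
  using W blocks disj pattern
proof (induction W rule: finite_induct)
  case empty
  then show ?case using E by (simp add: card_PiE)
next
  case (insert w0 W)
  let ?S = "{h \<in> PiE E (\<lambda>_. K). \<forall>w\<in>W. \<exists>x\<in>D w. h x \<noteq> \<phi> w x}"
  let ?\<psi>0 = "restrict (\<phi> w0) (D w0)"
  let ?T = "{h \<in> ?S. \<forall>x\<in>D w0. h x = ?\<psi>0 x}"
  have D0: "D w0 \<subseteq> E" "finite (D w0)" "card (D w0) = d"
    using insert.prems E by (auto intro: finite_subset)
  have apart: "D w0 \<inter> D w = {}" if "w \<in> W" for w
    using insert.prems(3) insert.hyps(2) that by (auto simp: disjoint_family_on_def)
  have IH: "real (card ?S) = real (card K) ^ card E * (1 - 1 / real (card K) ^ d) ^ card W"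
    using insert.prems by (intro insert.IH) (auto simp: disjoint_family_on_def)
  have closed: "override_on h \<psi> (D w0) \<in> ?S" if "h \<in> ?S" "\<psi> \<in> PiE (D w0) (\<lambda>_. K)" for h \<psi>
  proof -
    have "override_on h \<psi> (D w0) \<in> PiE E (\<lambda>_. K)"
      using that D0(1) by (auto simp: override_on_def PiE_iff extensional_def)
    moreover have "\<forall>w\<in>W. \<exists>x\<in>D w. override_on h \<psi> (D w0) x \<noteq> \<phi> w x"
      using that(1) apart by (fastforce simp: override_on_def)
    ultimately show ?thesis by blast
  qed
  have finS: "finite ?S"
    by (rule finite_subset[OF _ finite_PiE[of E "\<lambda>_. K"]]) (use E K in auto)
  have \<psi>0: "?\<psi>0 \<in> PiE (D w0) (\<lambda>_. K)"
    using insert.prems(4) by auto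
  have "card ?S = card K ^ d * card ?T"
    using card_eq_card_fibre_mult[OF _ finS K(1) D0(1,2) closed \<psi>0] D0(3) by (simp cong: conj_cong)
  then have T: "real (card ?T) = real (card ?S) / real (card K) ^ d"
    using K by (simp add: card_gt_0_iff)
  have "?T \<subseteq> ?S"
    by auto
  moreover have "{h \<in> PiE E (\<lambda>_. K). \<forall>w\<in>insert w0 W. \<exists>x\<in>D w. h x \<noteq> \<phi> w x} = ?S - ?T"
    by auto
  ultimately have "real (card {h \<in> PiE E (\<lambda>_. K). \<forall>w\<in>insert w0 W. \<exists>x\<in>D w. h x \<noteq> \<phi> w x})
      = real (card ?S) - real (card ?T)"
    using card_mono[OF finS] card_Diff_subset[OF finite_subset[OF _ finS]] by (simp add: of_nat_diff)
  also have "\<dots> = real (card ?S) * (1 - 1 / real (card K) ^ d)"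
    using T by (simp add: algebra_simps)
  finally show ?case
    using IH insert.hyps by simp
qed

lemma exists_outside_bad_sets:
  assumes "finite \<Omega>" "finite I" "\<And>r. r \<in> I \<Longrightarrow> Bad r \<subseteq> \<Omega>"
    and "\<And>r. r \<in> I \<Longrightarrow> real (card (Bad r)) \<le> b" and "real (card I) * b < real (card \<Omega>)"
  shows "\<exists>\<omega>\<in>\<Omega>. \<forall>r\<in>I. \<omega> \<notin> Bad r"
proof (rule ccontr)
  assume "\<not> ?thesis"
  then have "\<Omega> \<subseteq> (\<Union>r\<in>I. Bad r)"
    by blast
  then have "real (card \<Omega>) \<le> real (card (\<Union>r\<in>I. Bad r))"
    using assms(1-3) by (intro of_nat_mono card_mono) (auto intro: finite_subset)
  also have "\<dots> \<le> (\<Sum>r\<in>I. real (card (Bad r)))"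
    using card_UN_le[OF assms(2), of Bad] by (simp flip: of_nat_sum)
  also have "\<dots> \<le> real (card I) * b"
    using sum_bounded_above[of I "\<lambda>r. real (card (Bad r))" b] assms(4) by simp
  finally show False
    using assms(5) by simp
qed

section \<open>Binomial estimates\<close>

lemma binomial_add_le_mult: "(s + u + v) choose s \<le> ((s + u) choose s) * ((s + v) choose s)"
proof (induction v)
  case 0
  then show ?case by simp
next
  case (Suc v)
  define P P' Q Q' where "P = (s + v) choose s" and "P' = (s + Suc v) choose s"
    and "Q = (s + u + v) choose s" and "Q' = (s + u + Suc v) choose s"
  have P': "(v + 1) * P' = (s + v + 1) * P"
    using binomial_absorb_comp[of "s + v + 1" s] by (simp add: P_def P'_def)
  have Q': "(u + v + 1) * Q' = (s + u + v + 1) * Q"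
    using binomial_absorb_comp[of "s + u + v + 1" s] by (simp add: Q_def Q'_def)
  have "Q' * ((v + 1) * (u + v + 1)) = ((u + v + 1) * Q') * (v + 1)"
    by (simp only: mult_ac)
  also have "\<dots> = Q * ((s + u + v + 1) * (v + 1))"
    unfolding Q' by (simp only: mult_ac)
  also have "\<dots> \<le> Q * ((s + v + 1) * (u + v + 1))"
    by (intro mult_left_mono) (simp_all add: algebra_simps)
  also have "\<dots> \<le> ((s + u) choose s) * P * ((s + v + 1) * (u + v + 1))"
    using Suc.IH by (intro mult_right_mono) (simp_all add: P_def Q_def)
  also have "\<dots> = ((s + u) choose s) * ((v + 1) * P') * (u + v + 1)"
    unfolding P' by (simp only: mult_ac)
  also have "\<dots> = ((s + u) choose s) * P' * ((v + 1) * (u + v + 1))"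
    by (simp only: mult_ac)
  finally have "Q' \<le> ((s + u) choose s) * P'"
    by (simp only: mult_le_cancel2) simp
  then show ?case
    by (simp add: P'_def Q'_def)
qed

lemma binomial_pred_central_lower_bound:
  assumes "s \<ge> 1"
  shows "4 ^ s / (4 * real s) \<le> real ((2*s - 1) choose s)"
proof -
  have "(2*s) choose s = ((2*s - 1) choose (s - 1)) + ((2*s - 1) choose s)"
    using binomial_Suc_Suc[of "2*s - 1" "s - 1"] assms by (simp add: Suc_diff_le)
  moreover have "(2*s - 1) choose (s - 1) = (2*s - 1) choose s"
    using binomial_symmetric[of "s - 1" "2*s - 1"] assms by (simp add: numeral_2_eq_2)
  ultimately have "real ((2*s) choose s) = 2 * real ((2*s - 1) choose s)"
    by simp
  moreover have "4 ^ s / (2 * real s) \<le> real ((2*s) choose s)"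
    using central_binomial_lower_bound[of s] assms by simp
  ultimately show ?thesis
    using assms by (simp add: field_simps)
qed

lemma binomial_pred_central_le:
  assumes "1 \<le> s" "2*s - 1 \<le> m"
  shows "(2*s - 1) choose s \<le> m choose (m + 1 - s)"
proof -
  have "(2*s - 1) choose s = (2*s - 1) choose (s - 1)"
    using binomial_symmetric[of "s - 1" "2*s - 1"] assms(1) by (simp add: numeral_2_eq_2)
  also have "\<dots> \<le> m choose (s - 1)"
    by (rule binomial_right_mono) (use assms in simp)
  also have "\<dots> = m choose (m + 1 - s)"
    using binomial_symmetric[of "s - 1" m] assms by simp
  finally show ?thesis .
qed

lemma card_image_Un_subsets:
  assumes "finite Y" "F \<inter> Y = {}"
  shows "card ((\<union>) F ` {Q. Q \<subseteq> Y \<and> card Q = b}) = card Y choose b"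
proof -
  have "inj_on ((\<union>) F) {Q. Q \<subseteq> Y \<and> card Q = b}"
    by (rule inj_on_inverseI[where g = "\<lambda>B. B \<inter> Y"]) (use assms(2) in auto)
  then show ?thesis
    by (simp add: card_image n_subsets assms(1))
qed

lemma card_image_Un_Un_subsets:
  assumes "finite X" "finite Y" "X \<inter> Y = {}" "F \<inter> (X \<union> Y) = {}"
  shows "card ((\<lambda>(S, Q). F \<union> S \<union> Q) ` ({S. S \<subseteq> X \<and> card S = a} \<times> {Q. Q \<subseteq> Y \<and> card Q = b}))
    = (card X choose a) * (card Y choose b)"
proof -
  have "inj_on (\<lambda>(S, Q). F \<union> S \<union> Q) ({S. S \<subseteq> X \<and> card S = a} \<times> {Q. Q \<subseteq> Y \<and> card Q = b})"
    by (rule inj_on_inverseI[where g = "\<lambda>B. (B \<inter> X, B \<inter> Y)"]) (use assms(3,4) in auto)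
  then show ?thesis
    by (simp add: card_image n_subsets assms(1,2) card_cartesian_product)
qed

lemma card_Un3_disjoint:
  assumes "finite A" "finite B" "finite C" "A \<inter> B = {}" "A \<inter> C = {}" "B \<inter> C = {}"
  shows "card (A \<union> B \<union> C) = card A + card B + card C"
  using assms by (simp add: card_Un_disjoint Int_Un_distrib2)

section \<open>Representations as atom labellings\<close>

text \<open>A representation over \<open>U\<close> amounts to labelling the pairs of points by atoms so that
  every triangle is an allowed cycle (\<open>consistent\<close>) and every allowed cycle over a pair
  is completed by some point (\<open>saturated\<close>).\<close>
locale rep_labelling =
  fixes n :: nat and U :: "'u set" and lab :: "'u \<Rightarrow> 'u \<Rightarrow> atom"
  assumes lab_atoms: "\<And>x y. x \<in> U \<Longrightarrow> y \<in> U \<Longrightarrow> lab x y \<in> atoms n"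
    and lab_sym: "\<And>x y. x \<in> U \<Longrightarrow> y \<in> U \<Longrightarrow> lab x y = lab y x"
    and lab_One_iff: "\<And>x y. x \<in> U \<Longrightarrow> y \<in> U \<Longrightarrow> lab x y = One \<longleftrightarrow> x = y"
    and lab_realises: "\<And>a. a \<in> atoms n \<Longrightarrow> \<exists>x\<in>U. \<exists>y\<in>U. lab x y = a"
    and consistent: "\<And>x y z. x \<in> U \<Longrightarrow> y \<in> U \<Longrightarrow> z \<in> U \<Longrightarrow> le_comp (lab x y) (lab y z) (lab x z)"
    and saturated: "\<And>x z a b. x \<in> U \<Longrightarrow> z \<in> U \<Longrightarrow> a \<in> atoms n \<Longrightarrow> b \<in> atoms n \<Longrightarrow>
      le_comp a b (lab x z) \<Longrightarrow> \<exists>y\<in>U. lab x y = a \<and> lab y z = b"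
begin

definition rel :: "atom \<Rightarrow> ('u \<times> 'u) set" where
  "rel a = {(x, y) \<in> U \<times> U. lab x y = a}"

lemma rel_comp:
  assumes "a \<in> atoms n" "b \<in> atoms n"
  shows "rel a O rel b = (\<Union>c\<in>{c \<in> atoms n. le_comp a b c}. rel c)"
proof (intro equalityI subsetI)
  fix p assume "p \<in> rel a O rel b"
  then obtain x y z where "p = (x, z)" "x \<in> U" "y \<in> U" "z \<in> U" "lab x y = a" "lab y z = b"
    by (auto simp: rel_def)
  then show "p \<in> (\<Union>c\<in>{c \<in> atoms n. le_comp a b c}. rel c)"
    using consistent[of x y z] lab_atoms[of x z] by (auto simp: rel_def)
next
  fix p assume "p \<in> (\<Union>c\<in>{c \<in> atoms n. le_comp a b c}. rel c)"
  then obtain x z where "p = (x, z)" "x \<in> U" "z \<in> U" "le_comp a b (lab x z)"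
    by (auto simp: rel_def)
  then show "p \<in> rel a O rel b"
    using saturated[OF _ _ assms] by (fastforce simp: rel_def)
qed

lemma is_rep_rel: "is_rep n U rel"
proof -
  have "rel a \<noteq> {}" if "a \<in> atoms n" for a
    using lab_realises[OF that] by (auto simp: rel_def)
  moreover have "(\<Union>a\<in>atoms n. rel a) = U \<times> U"
    using lab_atoms by (auto simp: rel_def)
  moreover have "rel One = Id_on U"
    using lab_One_iff by (auto simp: rel_def Id_on_def)
  moreover have "(rel a)\<inverse> = rel a" for a
    using lab_sym by (auto simp: rel_def)
  ultimately show ?thesis
    unfolding is_rep_def using rel_comp by (auto simp: rel_def)
qed

end

lemma rep_labelling_image:
  assumes "rep_labelling n V lab" "inj_on h V"
  shows "rep_labelling n (h ` V) (\<lambda>x y. lab (inv_into V h x) (inv_into V h y))"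
proof -
  interpret rep_labelling n V lab by fact
  show ?thesis
  proof
    fix a assume "a \<in> atoms n"
    then show "\<exists>x\<in>h ` V. \<exists>y\<in>h ` V. lab (inv_into V h x) (inv_into V h y) = a"
      using lab_realises assms(2) by fastforce
  next
    fix x z a b assume "x \<in> h ` V" "z \<in> h ` V" "a \<in> atoms n" "b \<in> atoms n"
      "le_comp a b (lab (inv_into V h x) (inv_into V h z))"
    then show "\<exists>y\<in>h ` V. lab (inv_into V h x) (inv_into V h y) = a \<and>
        lab (inv_into V h y) (inv_into V h z) = b"
      using saturated assms(2) by fastforce
  qed (use assms(2) lab_atoms lab_sym lab_One_iff consistent in \<open>auto simp: inj_on_eq_iff\<close>)
qed

lemma f_le_card_if_rep_labelling:
  assumes "rep_labelling n V lab" "finite V"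
  shows "f n \<le> enat (card V)"
proof -
  obtain h :: "_ \<Rightarrow> nat" and m where h: "h ` V = {..<m}" "inj_on h V"
    using finite_imp_inj_to_nat_seg[OF assms(2)] by (auto simp: lessThan_def)
  interpret image: rep_labelling n "h ` V" "\<lambda>x y. lab (inv_into V h x) (inv_into V h y)"
    by (rule rep_labelling_image[OF assms(1) h(2)])
  have "finite (h ` V)"
    using h(1) by simp
  then have "enat (card (h ` V)) \<in> Spec n"
    unfolding Spec_def using image.is_rep_rel
    by (intro CollectI exI[of _ "h ` V"] exI[of _ image.rel]) simp
  then have "f n \<le> enat (card (h ` V))"
    unfolding f_def by (rule Inf_lower)
  then show ?thesis
    using card_image[OF h(2)] by simp
qed

section \<open>The \<open>3s\<close>-subsets of a \<open>(6s - 1)\<close>-set\<close>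

definition verts :: "nat \<Rightarrow> nat set set" where
  "verts s = {A. A \<subseteq> {..<6*s - 1} \<and> card A = 3*s}"

definition blue_middles :: "nat \<Rightarrow> nat set \<Rightarrow> nat set \<Rightarrow> nat set set" where
  "blue_middles s A C = {B \<in> verts s. card (A \<inter> B) \<le> s \<and> card (B \<inter> C) \<le> s}"

definition red_blue_middles :: "nat \<Rightarrow> nat set \<Rightarrow> nat set \<Rightarrow> nat set set" where
  "red_blue_middles s A C = {B \<in> verts s. B \<noteq> A \<and> s < card (A \<inter> B) \<and> card (B \<inter> C) \<le> s}"

lemma finite_verts: "finite (verts s)"
  by (rule finite_subset[of _ "Pow {..<6*s - 1}"]) (auto simp: verts_def)

lemma finite_mem_verts: "A \<in> verts s \<Longrightarrow> finite A"
  by (auto simp: verts_def intro: finite_subset)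

lemma card_verts: "card (verts s) = (6*s - 1) choose (3*s)"
  using n_subsets[of "{..<6*s - 1}" "3*s"] by (simp add: verts_def)

lemma card_Venn_regions_verts:
  assumes A: "A \<in> verts s" and C: "C \<in> verts s" and s: "s \<ge> 1"
  shows "card (A - C) = 3*s - card (A \<inter> C)" "card (C - A) = 3*s - card (A \<inter> C)"
    "card ({..<6*s - 1} - (A \<union> C)) = card (A \<inter> C) - 1"
    "1 \<le> card (A \<inter> C)" "card (A \<inter> C) \<le> 3*s"
proof -
  have fin: "finite A" "finite C" and card: "card A = 3*s" "card C = 3*s"
    and sub: "A \<union> C \<subseteq> {..<6*s - 1}"
    using A C by (auto simp: verts_def intro: finite_mem_verts)
  have union: "card (A \<union> C) + card (A \<inter> C) = 6*s"
    using card_Un_Int[OF fin] card by simp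
  moreover have "card (A \<union> C) \<le> 6*s - 1"
    using card_mono[OF _ sub] by simp
  ultimately show "1 \<le> card (A \<inter> C)"
    using s by linarith
  show "card (A - C) = 3*s - card (A \<inter> C)" "card (C - A) = 3*s - card (A \<inter> C)"
    using card_Diff_subset_Int[of A C] card_Diff_subset_Int[of C A] fin card
    by (simp_all add: Int_commute)
  show "card ({..<6*s - 1} - (A \<union> C)) = card (A \<inter> C) - 1"
    using card_Diff_subset[OF finite_subset[OF sub] sub] union by simp
  show "card (A \<inter> C) \<le> 3*s"
    using card_mono[OF fin(1), of "A \<inter> C"] card by simp
qed

lemma diff_nonempty_verts:
  assumes "A \<in> verts s" "C \<in> verts s" "A \<noteq> C"
  shows "A - C \<noteq> {}"
proof
  assume "A - C = {}"
  then have "A = C"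
    using card_subset_eq[OF finite_mem_verts[OF assms(2)]] assms(1,2) by (simp add: verts_def)
  with assms(3) show False ..
qed

text \<open>Three sets of size \<open>3s\<close> pairwise meeting in at most \<open>s\<close> points would cover \<open>6s\<close> points.\<close>
lemma no_blue_triangle:
  assumes "A \<in> verts s" "B \<in> verts s" "C \<in> verts s" "s \<ge> 1"
    and "card (A \<inter> B) \<le> s" "card (A \<inter> C) \<le> s" "card (B \<inter> C) \<le> s"
  shows False
proof -
  have fin: "finite A" "finite B" "finite C" and card: "card A = 3*s" "card B = 3*s" "card C = 3*s"
    and sub: "A \<union> B \<union> C \<subseteq> {..<6*s - 1}"
    using assms(1-3) by (auto simp: verts_def intro: finite_mem_verts)
  have "card (A \<union> B) + card (A \<inter> B) = 6*s"
    using card_Un_Int[of A B] fin card by simp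
  moreover have "card (A \<union> B \<union> C) + card ((A \<inter> C) \<union> (B \<inter> C)) = card (A \<union> B) + 3*s"
    using card_Un_Int[of "A \<union> B" C] fin card by (simp add: Int_Un_distrib2)
  moreover have "card ((A \<inter> C) \<union> (B \<inter> C)) \<le> card (A \<inter> C) + card (B \<inter> C)"
    by (rule card_Un_le)
  moreover have "card (A \<union> B \<union> C) \<le> 6*s - 1"
    using card_mono[OF _ sub] by simp
  ultimately show False
    using assms(4-) by linarith
qed

lemma card_blue_middles_ge_if_meet_le:
  assumes A: "A \<in> verts s" and C: "C \<in> verts s" and s: "s \<ge> 1"
    and t: "s < card (A \<inter> C)" "card (A \<inter> C) \<le> 2*s"
  shows "(2*s - 1) choose s \<le> card (blue_middles s A C)"
proof -
  define t X Y Out where "t = card (A \<inter> C)" and "X = A - C" and "Y = C - A"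
    and "Out = {..<6*s - 1} - (A \<union> C)"
  have fin: "finite X" "finite Y" "finite Out"
    using A C by (auto simp: X_def Y_def Out_def intro: finite_mem_verts)
  have card: "card X = 3*s - t" "card Y = 3*s - t" "card Out = t - 1" "t \<le> 3*s"
    using card_Venn_regions_verts[OF A C s] by (simp_all only: X_def Y_def Out_def t_def)
  have "s \<le> card Y"
    using card t by (simp add: t_def)
  then obtain Y' where Y': "Y' \<subseteq> Y" "card Y' = s"
    by (meson obtain_subset_with_card_n)
  let ?F = "(\<lambda>(S, Q). Y' \<union> S \<union> Q) ` ({S. S \<subseteq> X \<and> card S = s} \<times> {Q. Q \<subseteq> Out \<and> card Q = s})"
  have "?F \<subseteq> blue_middles s A C"
  proof
    fix B assume "B \<in> ?F"
    then obtain S Q where SQ: "S \<subseteq> X" "card S = s" "Q \<subseteq> Out" "card Q = s" "B = Y' \<union> S \<union> Q"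
      by auto
    have "card B = s + s + s"
      using SQ Y' fin card_Un3_disjoint[of Y' S Q]
      by (auto simp: X_def Y_def Out_def intro: finite_subset)
    moreover have "A \<inter> B = S" "B \<inter> C = Y'" "B \<subseteq> {..<6*s - 1}"
      using SQ Y' A C by (auto simp: X_def Y_def Out_def verts_def)
    ultimately show "B \<in> blue_middles s A C"
      using SQ Y' by (simp add: blue_middles_def verts_def)
  qed
  moreover have "card ?F = ((3*s - t) choose s) * ((t - 1) choose s)"
    using card_image_Un_Un_subsets[of X Out Y' s s] fin card Y' by (auto simp: X_def Y_def Out_def)
  moreover have "(2*s - 1) choose s \<le> ((3*s - t) choose s) * ((t - 1) choose s)"
    using binomial_add_le_mult[of s "2*s - t" "t - 1 - s"] t by (simp add: t_def)
  ultimately show ?thesis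
    using card_mono[of "blue_middles s A C" ?F] finite_verts
    by (force simp: blue_middles_def)
qed

lemma card_blue_middles_ge_if_meet_gt:
  assumes A: "A \<in> verts s" and C: "C \<in> verts s" and s: "s \<ge> 1"
    and t: "2*s < card (A \<inter> C)"
  shows "(2*s - 1) choose s \<le> card (blue_middles s A C)"
proof -
  define t X Y Out where "t = card (A \<inter> C)" and "X = A - C" and "Y = C - A"
    and "Out = {..<6*s - 1} - (A \<union> C)"
  have fin: "finite X" "finite Y" "finite Out" "finite (A \<inter> C)"
    using A C by (auto simp: X_def Y_def Out_def intro: finite_mem_verts)
  have card: "card X = 3*s - t" "card Y = 3*s - t" "card Out = t - 1" "t \<le> 3*s"
    using card_Venn_regions_verts[OF A C s] by (simp_all only: X_def Y_def Out_def t_def)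
  have t2: "2*s < t"
    using t by (simp add: t_def)
  have "t - 2*s \<le> card (A \<inter> C)"
    by (simp add: t_def)
  then obtain P where P: "P \<subseteq> A \<inter> C" "card P = t - 2*s"
    by (meson obtain_subset_with_card_n)
  let ?F = "(\<union>) (X \<union> Y \<union> P) ` {Q. Q \<subseteq> Out \<and> card Q = t - s}"
  have "?F \<subseteq> blue_middles s A C"
  proof
    fix B assume "B \<in> ?F"
    then obtain Q where Q: "Q \<subseteq> Out" "card Q = t - s" "B = X \<union> Y \<union> P \<union> Q"
      by auto
    have disj: "X \<inter> Y = {}" "X \<inter> P = {}" "Y \<inter> P = {}" "(X \<union> Y \<union> P) \<inter> Q = {}"
      using P Q by (auto simp: X_def Y_def Out_def)
    have finPQ: "finite P" "finite Q"
      using finite_subset[OF P(1) fin(4)] finite_subset[OF Q(1) fin(3)] by simp_all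
    have "card B = card (X \<union> Y \<union> P) + card Q"
      using Q(3) disj(4) fin finPQ by (simp add: card_Un_disjoint)
    also have "\<dots> = 3*s"
      using card_Un3_disjoint[OF fin(1,2) finPQ(1) disj(1-3)] card P Q t2 by simp
    finally have "card B = 3*s" .
    moreover have "A \<inter> B = X \<union> P" "B \<inter> C = Y \<union> P" "B \<subseteq> {..<6*s - 1}"
      using Q P A C by (auto simp: X_def Y_def Out_def verts_def)
    moreover have "card (X \<union> P) = s" "card (Y \<union> P) = s"
      using card_Un_disjoint[OF fin(1) finPQ(1) disj(2)] card_Un_disjoint[OF fin(2) finPQ(1) disj(3)]
        card P t2 by simp_all
    ultimately show "B \<in> blue_middles s A C"
      by (simp add: blue_middles_def verts_def)
  qed
  moreover have "card ?F = (t - 1) choose (t - s)"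
    using card_image_Un_subsets[of Out "X \<union> Y \<union> P" "t - s"] fin card P
    by (auto simp: X_def Y_def Out_def)
  moreover have "(2*s - 1) choose s \<le> (t - 1) choose (t - s)"
    using binomial_pred_central_le[of s "t - 1"] s t2 by simp
  ultimately show ?thesis
    using card_mono[of "blue_middles s A C" ?F] finite_verts
    by (force simp: blue_middles_def)
qed

lemma card_blue_middles_ge:
  assumes "A \<in> verts s" "C \<in> verts s" "s \<ge> 1" "s < card (A \<inter> C)"
  shows "(2*s - 1) choose s \<le> card (blue_middles s A C)"
  using card_blue_middles_ge_if_meet_le[OF assms] card_blue_middles_ge_if_meet_gt[OF assms(1-3)]
  by linarith

lemma card_red_blue_middles_ge_if_meet_le:
  assumes A: "A \<in> verts s" and C: "C \<in> verts s" and s: "s \<ge> 1"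
    and t: "card (A \<inter> C) \<le> s"
  shows "(2*s - 1) choose s \<le> card (red_blue_middles s A C)"
proof -
  define t X Y Out where "t = card (A \<inter> C)" and "X = A - C" and "Y = C - A"
    and "Out = {..<6*s - 1} - (A \<union> C)"
  have fin: "finite X" "finite Y" "finite Out"
    using A C by (auto simp: X_def Y_def Out_def intro: finite_mem_verts)
  have card: "card X = 3*s - t" "card Y = 3*s - t" "card Out = t - 1" "1 \<le> t" "t \<le> s"
    using card_Venn_regions_verts[OF A C s] t by (simp_all only: X_def Y_def Out_def t_def)
  have "2*s + 1 - t \<le> card X"
    using card s by simp
  then obtain X' where X': "X' \<subseteq> X" "card X' = 2*s + 1 - t"
    by (meson obtain_subset_with_card_n)
  have finX': "finite X'"
    using finite_subset[OF X'(1) fin(1)] .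
  let ?F = "(\<union>) (Out \<union> X') ` {Q. Q \<subseteq> Y \<and> card Q = s}"
  have "?F \<subseteq> red_blue_middles s A C"
  proof
    fix B assume "B \<in> ?F"
    then obtain Q where Q: "Q \<subseteq> Y" "card Q = s" "B = Out \<union> X' \<union> Q"
      by auto
    have "Out \<inter> X' = {}" "Out \<inter> Q = {}" "X' \<inter> Q = {}"
      using X' Q by (auto simp: X_def Y_def Out_def)
    then have "card B = (t - 1) + (2*s + 1 - t) + s"
      using card_Un3_disjoint[OF fin(3) finX' finite_subset[OF Q(1) fin(2)]] Q X' card by simp
    moreover have "A \<inter> B = X'" "B \<inter> C = Q" "B \<subseteq> {..<6*s - 1}"
      using Q X' A C by (auto simp: X_def Y_def Out_def verts_def)
    moreover have "B \<noteq> A"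
    proof
      assume "B = A"
      then have "Q = {}"
        using Q by (auto simp: Y_def)
      then show False
        using Q(2) s by simp
    qed
    ultimately show "B \<in> red_blue_middles s A C"
      using X' Q(2) card by (simp add: red_blue_middles_def verts_def)
  qed
  moreover have "card ?F = (3*s - t) choose s"
    using card_image_Un_subsets[of Y "Out \<union> X'" s] fin card X' by (auto simp: X_def Y_def Out_def)
  moreover have "(2*s - 1) choose s \<le> (3*s - t) choose s"
    by (rule binomial_right_mono) (use card in linarith)
  ultimately show ?thesis
    using card_mono[of "red_blue_middles s A C" ?F] finite_verts
    by (force simp: red_blue_middles_def)
qed

lemma card_red_blue_middles_ge_if_meet_gt:
  assumes A: "A \<in> verts s" and C: "C \<in> verts s" and s: "s \<ge> 1" and AC: "A \<noteq> C"
    and t: "s < card (A \<inter> C)"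
  shows "(2*s - 1) choose s \<le> card (red_blue_middles s A C)"
proof -
  define X Out where "X = A - C" and "Out = {..<6*s - 1} - (A \<union> C)"
  have fin: "finite X" "finite Out" "finite (A \<inter> C)"
    using A C by (auto simp: X_def Out_def intro: finite_mem_verts)
  have card: "card X + card Out = 3*s - 1"
    using card_Venn_regions_verts[OF A C s] by (simp add: X_def Out_def)
  obtain x where x: "x \<in> X"
    using diff_nonempty_verts[OF A C AC] by (auto simp: X_def)
  obtain P where P: "P \<subseteq> A \<inter> C" "card P = s"
    using t by (meson less_imp_le obtain_subset_with_card_n)
  define R where "R = (X \<union> Out) - {x}"
  have "X \<inter> Out = {}"
    by (auto simp: X_def Out_def)
  then have "card (X \<union> Out) = 3*s - 1"
    using card_Un_disjoint[OF fin(1,2)] card by simp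
  then have finR: "finite R" and cardR: "card R = 3*s - 2"
    using fin x by (simp_all add: R_def)
  let ?F = "(\<union>) (insert x P) ` {Q. Q \<subseteq> R \<and> card Q = 2*s - 1}"
  have "?F \<subseteq> red_blue_middles s A C"
  proof
    fix B assume "B \<in> ?F"
    then obtain Q where Q: "Q \<subseteq> R" "card Q = 2*s - 1" "B = insert x P \<union> Q"
      by auto
    have finP: "finite P"
      using finite_subset[OF P(1) fin(3)] .
    have xP: "x \<notin> P" and disj: "insert x P \<inter> Q = {}"
      using P x Q by (auto simp: R_def X_def Out_def)
    then have "card B = (s + 1) + (2*s - 1)"
      using Q P finP finite_subset[OF Q(1) finR] by (simp add: card_Un_disjoint)
    moreover have "B \<subseteq> {..<6*s - 1}" "B \<inter> C = P" "insert x P \<subseteq> A \<inter> B"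
      using Q P x A C by (auto simp: R_def X_def Out_def verts_def)
    moreover have "s < card (A \<inter> B)"
      using card_mono[OF _ \<open>insert x P \<subseteq> A \<inter> B\<close>] finite_mem_verts[OF A] xP finP P(2) by simp
    moreover have "B \<noteq> A"
      using \<open>B \<inter> C = P\<close> P(2) t by (auto simp: Int_commute)
    ultimately show "B \<in> red_blue_middles s A C"
      using P(2) s by (simp add: red_blue_middles_def verts_def)
  qed
  moreover have "card ?F = (3*s - 2) choose (2*s - 1)"
    using card_image_Un_subsets[OF finR, of "insert x P" "2*s - 1"] cardR P x
    by (auto simp: R_def X_def Out_def)
  moreover have "(2*s - 1) choose s \<le> (3*s - 2) choose (2*s - 1)"
    using binomial_pred_central_le[of s "3*s - 2"] s by simp
  ultimately show ?thesis
    using card_mono[of "red_blue_middles s A C" ?F] finite_verts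
    by (force simp: red_blue_middles_def)
qed

lemma card_red_blue_middles_ge:
  assumes "A \<in> verts s" "C \<in> verts s" "s \<ge> 1" "A \<noteq> C"
  shows "(2*s - 1) choose s \<le> card (red_blue_middles s A C)"
  using card_red_blue_middles_ge_if_meet_le[OF assms(1-3)] card_red_blue_middles_ge_if_meet_gt[OF assms]
  by linarith

lemma red_red_middle_exists_if_meet_gt:
  assumes A: "A \<in> verts s" and C: "C \<in> verts s" and s: "s \<ge> 1"
    and t: "s < card (A \<inter> C)"
  shows "\<exists>B\<in>verts s. B \<noteq> A \<and> B \<noteq> C \<and> s < card (A \<inter> B) \<and> s < card (B \<inter> C)"
proof -
  have "s + 1 \<le> card (A \<inter> C)"
    using t by simp
  then obtain Z where Z: "Z \<subseteq> A \<inter> C" "card Z = s + 1"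
    by (meson obtain_subset_with_card_n)
  have "0 < card ({..<6*s - 1} - (A \<union> C))"
    using card_Venn_regions_verts(3)[OF A C s] t s by simp
  then have "{..<6*s - 1} - (A \<union> C) \<noteq> {}"
    by (metis card.empty less_irrefl)
  then obtain u where u: "u < 6*s - 1" "u \<notin> A" "u \<notin> C"
    by blast
  have ZG: "insert u Z \<subseteq> {..<6*s - 1}" and uZ: "u \<notin> Z"
    using Z u A by (auto simp: verts_def)
  then have "card ({..<6*s - 1} - insert u Z) = 6*s - 1 - (s + 2)"
    using Z(2) finite_subset[OF ZG] by (simp add: card_Diff_subset)
  then have "2*s - 2 \<le> card ({..<6*s - 1} - insert u Z)"
    by simp
  then obtain Q where Q: "Q \<subseteq> {..<6*s - 1} - insert u Z" "card Q = 2*s - 2"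
    by (meson obtain_subset_with_card_n)
  define B where "B = insert u (Z \<union> Q)"
  have "u \<notin> Z \<union> Q" "Z \<inter> Q = {}"
    using Q uZ by auto
  then have "card B = 1 + (s + 1) + (2*s - 2)"
    using Z(2) Q(2) finite_subset[OF ZG] finite_subset[OF Q(1)] by (simp add: B_def card_Un_disjoint)
  moreover have "B \<subseteq> {..<6*s - 1}" "Z \<subseteq> A \<inter> B" "Z \<subseteq> B \<inter> C" "B \<noteq> A" "B \<noteq> C"
    using ZG Q Z u by (auto simp: B_def)
  moreover have "s < card (A \<inter> B)" "s < card (B \<inter> C)"
    using card_mono[OF _ \<open>Z \<subseteq> A \<inter> B\<close>] card_mono[OF _ \<open>Z \<subseteq> B \<inter> C\<close>]
      finite_mem_verts[OF A] finite_mem_verts[OF C] Z(2) by simp_all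
  ultimately show ?thesis
    using s by (intro bexI[of _ B]) (simp_all add: verts_def)
qed

lemma red_red_middle_exists_if_meet_le:
  assumes A: "A \<in> verts s" and C: "C \<in> verts s" and s: "s \<ge> 2"
    and t: "card (A \<inter> C) \<le> s"
  shows "\<exists>B\<in>verts s. B \<noteq> A \<and> B \<noteq> C \<and> s < card (A \<inter> B) \<and> s < card (B \<inter> C)"
proof -
  have "s + 1 \<le> card (A - C)" "s + 1 \<le> card (C - A)"
    using card_Venn_regions_verts[OF A C] s t by simp_all
  then obtain X Y where X: "X \<subseteq> A - C" "card X = s + 1" and Y: "Y \<subseteq> C - A" "card Y = s + 1"
    by (meson obtain_subset_with_card_n)
  have XY: "X \<union> Y \<subseteq> {..<6*s - 1}" "X \<inter> Y = {}" "finite X" "finite Y"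
    using X Y A C finite_mem_verts[OF A] finite_mem_verts[OF C] by (auto simp: verts_def intro: finite_subset)
  then have "card ({..<6*s - 1} - (X \<union> Y)) = 6*s - 1 - (2*s + 2)"
    using X(2) Y(2) by (simp add: card_Diff_subset card_Un_disjoint)
  then have "s - 2 \<le> card ({..<6*s - 1} - (X \<union> Y))"
    by simp
  then obtain Q where Q: "Q \<subseteq> {..<6*s - 1} - (X \<union> Y)" "card Q = s - 2"
    by (meson obtain_subset_with_card_n)
  define B where "B = X \<union> Y \<union> Q"
  have "X \<noteq> {}" "Y \<noteq> {}"
    using X(2) Y(2) by auto
  then have new: "B \<noteq> A" "B \<noteq> C"
    using X(1) Y(1) by (auto simp: B_def)
  have "card B = (s + 1) + (s + 1) + (s - 2)"
    using card_Un3_disjoint[of X Y Q] XY X(2) Y(2) Q finite_subset[OF Q(1)] by (auto simp: B_def)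
  moreover have "B \<subseteq> {..<6*s - 1}" "X \<subseteq> A \<inter> B" "Y \<subseteq> B \<inter> C"
    using XY Q X Y by (auto simp: B_def)
  moreover have "s < card (A \<inter> B)" "s < card (B \<inter> C)"
    using card_mono[OF _ \<open>X \<subseteq> A \<inter> B\<close>] card_mono[OF _ \<open>Y \<subseteq> B \<inter> C\<close>]
      finite_mem_verts[OF A] finite_mem_verts[OF C] X(2) Y(2) by simp_all
  ultimately show ?thesis
    using s new by (intro bexI[of _ B]) (simp_all add: verts_def)
qed

lemma red_red_middle_exists:
  assumes "A \<in> verts s" "C \<in> verts s" "s \<ge> 2"
  shows "\<exists>B\<in>verts s. B \<noteq> A \<and> B \<noteq> C \<and> s < card (A \<inter> B) \<and> s < card (B \<inter> C)"
  using red_red_middle_exists_if_meet_gt[OF assms(1,2)] red_red_middle_exists_if_meet_le[OF assms]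
    assms(3) by (cases "s < card (A \<inter> C)") auto

section \<open>Good colourings\<close>

definition blue_pairs :: "nat \<Rightarrow> nat set set set" where
  "blue_pairs s = {{A, C} | A C. A \<in> verts s \<and> C \<in> verts s \<and> card (A \<inter> C) \<le> s}"

lemma finite_blue_pairs: "finite (blue_pairs s)"
  by (rule finite_subset[of _ "Pow (verts s)"]) (auto simp: blue_pairs_def finite_verts)

definition colour_label :: "nat \<Rightarrow> (nat set set \<Rightarrow> nat) \<Rightarrow> nat set \<Rightarrow> nat set \<Rightarrow> atom" where
  "colour_label s g A C = (if A = C then One else if s < card (A \<inter> C) then Red else Blue (g {A, C}))"

lemma colour_label_sym: "colour_label s g A C = colour_label s g C A"
  by (simp add: colour_label_def Int_commute insert_commute)

lemma colour_label_Red: "A \<noteq> C \<Longrightarrow> s < card (A \<inter> C) \<Longrightarrow> colour_label s g A C = Red"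
  by (simp add: colour_label_def)

lemma colour_label_Blue:
  assumes "A \<in> verts s" "card (A \<inter> C) \<le> s" "s \<ge> 1"
  shows "colour_label s g A C = Blue (g {A, C})"
  using assms by (auto simp: colour_label_def verts_def)

lemma colour_label_consistent:
  assumes "A \<in> verts s" "B \<in> verts s" "C \<in> verts s" "s \<ge> 1"
  shows "le_comp (colour_label s g A B) (colour_label s g B C) (colour_label s g A C)"
  using no_blue_triangle[OF assms]
  by (auto simp: le_comp_def colour_label_def Int_commute insert_commute)

lemma diversity_atom_cases:
  assumes "a \<in> atoms n" "a \<noteq> One"
  obtains "a = Red" | j where "j \<in> {1..n}" "a = Blue j"
  using assms by (auto simp: atoms_def)

text \<open>The saturation conditions that depend on the colouring: completing a red pair by a
  blue-blue path, and any two points by a red-blue path.\<close>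
locale good_colouring =
  fixes s n :: nat and g :: "nat set set \<Rightarrow> nat"
  assumes two_le_s: "2 \<le> s"
    and colour_range: "\<And>e. e \<in> blue_pairs s \<Longrightarrow> g e \<in> {1..n}"
    and blue_paths: "\<And>A C i j. A \<in> verts s \<Longrightarrow> C \<in> verts s \<Longrightarrow> A \<noteq> C \<Longrightarrow> s < card (A \<inter> C) \<Longrightarrow>
      i \<in> {1..n} \<Longrightarrow> j \<in> {1..n} \<Longrightarrow> \<exists>B\<in>blue_middles s A C. g {A, B} = i \<and> g {B, C} = j"
    and red_blue_paths: "\<And>A C j. A \<in> verts s \<Longrightarrow> C \<in> verts s \<Longrightarrow> A \<noteq> C \<Longrightarrow> j \<in> {1..n} \<Longrightarrow>
      \<exists>B\<in>red_blue_middles s A C. g {B, C} = j"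
begin

lemma red_blue_path_exists:
  assumes "x \<in> verts s" "z \<in> verts s" "x \<noteq> z" "j \<in> {1..n}"
  shows "\<exists>y\<in>verts s. colour_label s g x y = Red \<and> colour_label s g y z = Blue j"
proof -
  obtain y where "y \<in> red_blue_middles s x z" "g {y, z} = j"
    using red_blue_paths[OF assms] by blast
  then show ?thesis
    using two_le_s by (auto simp: red_blue_middles_def colour_label_Blue intro!: colour_label_Red)
qed

lemma colour_label_neighbour_exists:
  assumes x: "x \<in> verts s" and a: "a \<in> atoms n" "a \<noteq> One"
  shows "\<exists>y\<in>verts s. colour_label s g x y = a"
  using a
proof (cases rule: diversity_atom_cases)
  case 1
  then show ?thesis
    using red_red_middle_exists[OF x x two_le_s] colour_label_Red by blast
next
  case (2 j)
  obtain D where "D \<in> verts s" "D \<noteq> x"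
    using red_red_middle_exists[OF x x two_le_s] by blast
  then show ?thesis
    using red_blue_path_exists[OF _ x _ 2(1)] 2(2) by (metis colour_label_sym)
qed

lemma colour_label_diversity_path_exists:
  assumes x: "x \<in> verts s" and z: "z \<in> verts s" and "x \<noteq> z"
    and a: "a \<in> atoms n" "a \<noteq> One" and b: "b \<in> atoms n" "b \<noteq> One"
    and red: "a = Red \<or> b = Red \<or> colour_label s g x z = Red"
  shows "\<exists>y\<in>verts s. colour_label s g x y = a \<and> colour_label s g y z = b"
  using a
proof (cases rule: diversity_atom_cases)
  case a_Red: 1
  from b show ?thesis
  proof (cases rule: diversity_atom_cases)
    case 1
    then show ?thesis
      using red_red_middle_exists[OF x z two_le_s] a_Red colour_label_Red by blast
  next
    case (2 j)
    then show ?thesis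
      using red_blue_path_exists[OF x z \<open>x \<noteq> z\<close>] a_Red by blast
  qed
next
  case a_Blue: (2 i)
  from b show ?thesis
  proof (cases rule: diversity_atom_cases)
    case 1
    then show ?thesis
      using red_blue_path_exists[OF z x _ a_Blue(1)] \<open>x \<noteq> z\<close> a_Blue(2) by (metis colour_label_sym)
  next
    case (2 j)
    then have "s < card (x \<inter> z)"
      using red a_Blue \<open>x \<noteq> z\<close> by (auto simp: colour_label_def split: if_splits)
    then obtain y where y: "y \<in> blue_middles s x z" "g {x, y} = i" "g {y, z} = j"
      using blue_paths[OF x z \<open>x \<noteq> z\<close>] a_Blue 2 by blast
    then have "colour_label s g x y = a" "colour_label s g y z = b"
      using a_Blue 2 two_le_s x by (auto simp: blue_middles_def colour_label_Blue)
    then show ?thesis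
      using y(1) by (auto simp: blue_middles_def)
  qed
qed

lemma colour_label_saturated:
  assumes x: "x \<in> verts s" and z: "z \<in> verts s" and a: "a \<in> atoms n" and b: "b \<in> atoms n"
    and le: "le_comp a b (colour_label s g x z)"
  shows "\<exists>y\<in>verts s. colour_label s g x y = a \<and> colour_label s g y z = b"
proof -
  consider "a = One" | "b = One" | "a \<noteq> One" "b \<noteq> One" "x = z" | "a \<noteq> One" "b \<noteq> One" "x \<noteq> z"
    by blast
  then show ?thesis
  proof cases
    case 1
    then have "colour_label s g x z = b"
      using le by (simp add: le_comp_def)
    then show ?thesis
      using x 1 by (intro bexI[of _ x]) (simp_all add: colour_label_def)
  next
    case 2
    then have "colour_label s g x z = a"
      using le by (cases "a = One") (simp_all add: le_comp_def)
    then show ?thesis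
      using z 2 by (intro bexI[of _ z]) (simp_all add: colour_label_def)
  next
    case 3
    then have "b = a"
      using le by (simp add: le_comp_def colour_label_def)
    then show ?thesis
      using colour_label_neighbour_exists[OF x a 3(1)] \<open>x = z\<close> by (metis colour_label_sym)
  next
    case 4
    then have "a = Red \<or> b = Red \<or> colour_label s g x z = Red"
      using le by (simp add: le_comp_def colour_label_def)
    then show ?thesis
      using colour_label_diversity_path_exists[OF x z 4(3) a 4(1) b 4(2)] by blast
  qed
qed

lemma rep_labelling_colour_label: "rep_labelling n (verts s) (colour_label s g)"
proof
  fix x y assume xy: "x \<in> verts s" "y \<in> verts s"
  have "card (x \<inter> y) \<le> s \<Longrightarrow> g {x, y} \<in> {1..n}"
    using colour_range[of "{x, y}"] xy by (auto simp: blue_pairs_def)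
  then show "colour_label s g x y \<in> atoms n"
    by (auto simp: colour_label_def atoms_def)
  show "colour_label s g x y = colour_label s g y x"
    by (rule colour_label_sym)
  show "colour_label s g x y = One \<longleftrightarrow> x = y"
    by (simp add: colour_label_def)
next
  fix a assume a: "a \<in> atoms n"
  have "{..<3*s} \<in> verts s"
    by (simp add: verts_def)
  then show "\<exists>x\<in>verts s. \<exists>y\<in>verts s. colour_label s g x y = a"
    using colour_label_neighbour_exists[OF _ a] by (cases "a = One") (auto simp: colour_label_def)
next
  fix x y z assume "x \<in> verts s" "y \<in> verts s" "z \<in> verts s"
  then show "le_comp (colour_label s g x y) (colour_label s g y z) (colour_label s g x z)"
    using colour_label_consistent two_le_s by simp
qed (fact colour_label_saturated)

lemma f_le_card_verts: "f n \<le> enat (card (verts s))"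
  by (rule f_le_card_if_rep_labelling[OF rep_labelling_colour_label finite_verts])

end

section \<open>Existence of good colourings\<close>

lemma card_bad_blue_paths:
  assumes A: "A \<in> verts s" and C: "C \<in> verts s" and AC: "A \<noteq> C" "s < card (A \<inter> C)"
    and s: "s \<ge> 1" and n: "n \<ge> 1" and ij: "i \<in> {1..n}" "j \<in> {1..n}"
  shows "real (card {g \<in> PiE (blue_pairs s) (\<lambda>_. {1..n}).
            \<not> (\<exists>B\<in>blue_middles s A C. g {A, B} = i \<and> g {B, C} = j)})
         \<le> real n ^ card (blue_pairs s) * (1 - 1 / real n ^ 2) ^ ((2*s - 1) choose s)"
proof -
  define W where "W = blue_middles s A C"
  define D where "D = (\<lambda>B. {{A, B}, {B, C}})"
  define \<phi> where "\<phi> = (\<lambda>B e. if e = {A, B} then i else j)"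
  have no_C: "B \<noteq> C" "B \<noteq> A" if "B \<in> W" for B
    using that C A s by (auto simp: W_def blue_middles_def verts_def Int_commute)
  have "{g \<in> PiE (blue_pairs s) (\<lambda>_. {1..n}). \<not> (\<exists>B\<in>W. g {A, B} = i \<and> g {B, C} = j)}
      = {g \<in> PiE (blue_pairs s) (\<lambda>_. {1..n}). \<forall>B\<in>W. \<exists>e\<in>D B. g e \<noteq> \<phi> B e}"
    using AC(1) by (auto simp: D_def \<phi>_def doubleton_eq_iff)
  also have "real (card \<dots>) = real n ^ card (blue_pairs s) * (1 - 1 / real n ^ 2) ^ card W"
  proof (subst card_PiE_avoiding_patterns)
    show "finite (blue_pairs s)"
      by (rule finite_blue_pairs)
    show "finite W"
      using finite_verts by (auto simp: W_def blue_middles_def)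
    show "D B \<subseteq> blue_pairs s" if "B \<in> W" for B
      using that A C by (auto simp: D_def W_def blue_middles_def blue_pairs_def)
    have "{A, B} \<noteq> {B, C}" for B
      using AC(1) by (auto simp: doubleton_eq_iff)
    then show "card (D B) = 2" for B
      by (simp add: D_def)
    show "disjoint_family_on D W"
      using no_C by (auto simp: disjoint_family_on_def D_def doubleton_eq_iff)
  qed (use ij n in \<open>auto simp: \<phi>_def\<close>)
  also have "\<dots> \<le> real n ^ card (blue_pairs s) * (1 - 1 / real n ^ 2) ^ ((2*s - 1) choose s)"
    using card_blue_middles_ge[OF A C s AC(2)] n
    by (intro mult_left_mono power_decreasing) (auto simp: W_def)
  finally show ?thesis
    by (simp add: W_def)
qed

lemma card_bad_red_blue_paths:
  assumes A: "A \<in> verts s" and C: "C \<in> verts s" and AC: "A \<noteq> C"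
    and s: "s \<ge> 1" and n: "n \<ge> 1" and j: "j \<in> {1..n}"
  shows "real (card {g \<in> PiE (blue_pairs s) (\<lambda>_. {1..n}).
            \<not> (\<exists>B\<in>red_blue_middles s A C. g {B, C} = j)})
         \<le> real n ^ card (blue_pairs s) * (1 - 1 / real n ^ 2) ^ ((2*s - 1) choose s)"
proof -
  define W where "W = red_blue_middles s A C"
  have "{g \<in> PiE (blue_pairs s) (\<lambda>_. {1..n}). \<not> (\<exists>B\<in>W. g {B, C} = j)}
      = {g \<in> PiE (blue_pairs s) (\<lambda>_. {1..n}). \<forall>B\<in>W. \<exists>e\<in>{{B, C}}. g e \<noteq> j}"
    by auto
  also have "real (card \<dots>) = real n ^ card (blue_pairs s) * (1 - 1 / real n ^ 1) ^ card W"
  proof (subst card_PiE_avoiding_patterns)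
    show "finite (blue_pairs s)"
      by (rule finite_blue_pairs)
    show "finite W"
      using finite_verts by (auto simp: W_def red_blue_middles_def)
    show "{{B, C}} \<subseteq> blue_pairs s" if "B \<in> W" for B
      using that C by (auto simp: W_def red_blue_middles_def blue_pairs_def)
    show "disjoint_family_on (\<lambda>B. {{B, C}}) W"
      by (auto simp: disjoint_family_on_def doubleton_eq_iff)
  qed (use j n in auto)
  also have "\<dots> = real n ^ card (blue_pairs s) * (1 - 1 / real n) ^ card W"
    by simp
  also have "\<dots> \<le> real n ^ card (blue_pairs s) * (1 - 1 / real n) ^ ((2*s - 1) choose s)"
    using card_red_blue_middles_ge[OF A C s AC] n
    by (intro mult_left_mono power_decreasing) (auto simp: W_def)
  also have "\<dots> \<le> real n ^ card (blue_pairs s) * (1 - 1 / real n ^ 2) ^ ((2*s - 1) choose s)"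
    using n by (intro mult_left_mono power_mono) (auto simp: field_simps power2_eq_square)
  finally show ?thesis
    by (simp add: W_def)
qed

lemma colouring_meeting_requirements_exists:
  assumes s: "s \<ge> 2" and n: "n \<ge> 1"
    and small: "2 * real (card (verts s)) ^ 2 * real n ^ 2 * (1 - 1 / real n ^ 2) ^ ((2*s - 1) choose s) < 1"
  shows "\<exists>g\<in>PiE (blue_pairs s) (\<lambda>_. {1..n}). \<forall>A\<in>verts s. \<forall>C\<in>verts s. \<forall>i\<in>{1..n}. \<forall>j\<in>{1..n}.
    (A \<noteq> C \<and> s < card (A \<inter> C) \<longrightarrow> (\<exists>B\<in>blue_middles s A C. g {A, B} = i \<and> g {B, C} = j)) \<and>
    (A \<noteq> C \<longrightarrow> (\<exists>B\<in>red_blue_middles s A C. g {B, C} = j))"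
proof -
  define \<Omega> where "\<Omega> = PiE (blue_pairs s) (\<lambda>_. {1..n})"
  define I where "I = verts s \<times> verts s \<times> {1..n} \<times> {1..n}"
  define Bad where "Bad = (\<lambda>(A, C, i, j).
    {g \<in> \<Omega>. A \<noteq> C \<and> s < card (A \<inter> C) \<and> \<not> (\<exists>B\<in>blue_middles s A C. g {A, B} = i \<and> g {B, C} = j)} \<union>
    {g \<in> \<Omega>. A \<noteq> C \<and> \<not> (\<exists>B\<in>red_blue_middles s A C. g {B, C} = j)})"
  define X where "X = real n ^ card (blue_pairs s) * (1 - 1 / real n ^ 2) ^ ((2*s - 1) choose s)"
  have X0: "0 \<le> X"
    using n by (simp add: X_def field_simps)
  have "real (card (Bad r)) \<le> 2 * X" if "r \<in> I" for r
  proof -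
    obtain A C i j where r: "r = (A, C, i, j)" and AC: "A \<in> verts s" "C \<in> verts s"
      and ij: "i \<in> {1..n}" "j \<in> {1..n}"
      using \<open>r \<in> I\<close> by (auto simp: I_def)
    define P where "P = {g \<in> \<Omega>. A \<noteq> C \<and> s < card (A \<inter> C) \<and>
        \<not> (\<exists>B\<in>blue_middles s A C. g {A, B} = i \<and> g {B, C} = j)}"
    define Q where "Q = {g \<in> \<Omega>. A \<noteq> C \<and> \<not> (\<exists>B\<in>red_blue_middles s A C. g {B, C} = j)}"
    have "card (Bad r) \<le> card P + card Q"
      by (simp add: r Bad_def P_def Q_def card_Un_le)
    then have "real (card (Bad r)) \<le> real (card P) + real (card Q)"
      by (simp only: of_nat_add[symmetric] of_nat_le_iff)
    moreover have "real (card P) \<le> X"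
      using card_bad_blue_paths[OF AC _ _ _ n ij] s X0
      by (cases "A \<noteq> C \<and> s < card (A \<inter> C)") (auto simp: P_def \<Omega>_def X_def)
    moreover have "real (card Q) \<le> X"
      using card_bad_red_blue_paths[OF AC _ _ n ij(2)] s X0
      by (cases "A \<noteq> C") (auto simp: Q_def \<Omega>_def X_def)
    ultimately show ?thesis
      by linarith
  qed
  moreover have "real (card I) * (2 * X) < real (card \<Omega>)"
  proof -
    have "real (card I) * (2 * X) = real n ^ card (blue_pairs s) *
        (2 * real (card (verts s)) ^ 2 * real n ^ 2 * (1 - 1 / real n ^ 2) ^ ((2*s - 1) choose s))"
      by (simp add: I_def X_def card_cartesian_product power2_eq_square)
    also have "\<dots> < real n ^ card (blue_pairs s)"
      using small n by simp
    finally show ?thesis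
      by (simp add: \<Omega>_def card_PiE finite_blue_pairs)
  qed
  ultimately obtain g where g: "g \<in> \<Omega>" "\<forall>r\<in>I. g \<notin> Bad r"
    using exists_outside_bad_sets[of \<Omega> I Bad "2 * X"]
    by (auto simp: \<Omega>_def I_def Bad_def finite_verts finite_PiE finite_blue_pairs)
  have "(A \<noteq> C \<and> s < card (A \<inter> C) \<longrightarrow> (\<exists>B\<in>blue_middles s A C. g {A, B} = i \<and> g {B, C} = j)) \<and>
      (A \<noteq> C \<longrightarrow> (\<exists>B\<in>red_blue_middles s A C. g {B, C} = j))"
    if "A \<in> verts s" "C \<in> verts s" "i \<in> {1..n}" "j \<in> {1..n}" for A C i j
  proof -
    have "g \<notin> Bad (A, C, i, j)"
      using g(2) that by (simp add: I_def)
    then show ?thesis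
      using g(1) by (simp add: Bad_def) blast
  qed
  then show ?thesis
    using g(1) unfolding \<Omega>_def by blast
qed

lemma good_colouring_exists:
  assumes "s \<ge> 2" "n \<ge> 1"
    and "2 * real (card (verts s)) ^ 2 * real n ^ 2 * (1 - 1 / real n ^ 2) ^ ((2*s - 1) choose s) < 1"
  shows "\<exists>g. good_colouring s n g"
proof -
  obtain g where g: "g \<in> PiE (blue_pairs s) (\<lambda>_. {1..n})"
    and req: "\<forall>A\<in>verts s. \<forall>C\<in>verts s. \<forall>i\<in>{1..n}. \<forall>j\<in>{1..n}.
      (A \<noteq> C \<and> s < card (A \<inter> C) \<longrightarrow> (\<exists>B\<in>blue_middles s A C. g {A, B} = i \<and> g {B, C} = j)) \<and>
      (A \<noteq> C \<longrightarrow> (\<exists>B\<in>red_blue_middles s A C. g {B, C} = j))"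
    using colouring_meeting_requirements_exists[OF assms] by blast
  have "good_colouring s n g"
  proof
    show "g e \<in> {1..n}" if "e \<in> blue_pairs s" for e
      using g that by auto
    show "\<exists>B\<in>blue_middles s A C. g {A, B} = i \<and> g {B, C} = j"
      if "A \<in> verts s" "C \<in> verts s" "A \<noteq> C" "s < card (A \<inter> C)" "i \<in> {1..n}" "j \<in> {1..n}" for A C i j
      using req that by blast
    show "\<exists>B\<in>red_blue_middles s A C. g {B, C} = j"
      if "A \<in> verts s" "C \<in> verts s" "A \<noteq> C" "j \<in> {1..n}" for A C j
      using req that by blast
  qed (fact assms(1))
  then show ?thesis
    by blast
qed

section \<open>Choice of the parameter\<close>

lemma two_power_nat_ceiling_log_bounds:
  fixes a x :: real
  assumes "x > 0" "a * log 2 x \<ge> 0"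
  defines "s \<equiv> nat \<lceil>a * log 2 x\<rceil>"
  shows "x powr a \<le> 2 ^ s" "2 ^ s \<le> 2 * x powr a" "a * log 2 x \<le> real s" "real s \<le> a * log 2 x + 1"
proof -
  have s: "real s = of_int \<lceil>a * log 2 x\<rceil>"
    using assms(2) by (simp add: s_def)
  show lo: "a * log 2 x \<le> real s" and hi: "real s \<le> a * log 2 x + 1"
    unfolding s by (rule le_of_int_ceiling, rule of_int_ceiling_le_add_one)
  have "2 powr (a * log 2 x) = (2 powr log 2 x) powr a"
    by (simp add: powr_powr mult.commute)
  then have x: "2 powr (a * log 2 x) = x powr a"
    using assms(1) by simp
  show "x powr a \<le> 2 ^ s"
    using powr_mono[OF lo, of 2] x by (simp add: powr_realpow)
  show "2 ^ s \<le> 2 * x powr a"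
    using powr_mono[OF hi, of 2] x by (simp add: powr_realpow powr_add)
qed

lemma binomial_six_three_le:
  fixes y :: real
  assumes "1 \<le> s" "2 ^ s \<le> y"
  shows "real ((6*s - 1) choose (3*s)) \<le> y ^ 6 / 2"
proof -
  have "real ((6*s - 1) choose (3*s)) \<le> 2 ^ (6*s - 1)"
    using binomial_le_pow2[of "6*s - 1" "3*s"] by (simp flip: of_nat_le_iff)
  also have "(2::real) ^ (6*s - 1) = (2 ^ s) ^ 6 / 2"
    using assms(1) by (simp add: power_mult[symmetric] mult.commute power_diff)
  also have "\<dots> \<le> y ^ 6 / 2"
    using assms(2) by (intro divide_right_mono power_mono) simp_all
  finally show ?thesis .
qed

lemma binomial_pred_central_ge_powr:
  fixes a b x :: real
  assumes "1 \<le> s" "x > 0" "x powr a \<le> 2 ^ s" "real s \<le> b"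
  shows "x powr (2 * a) / (4 * b) \<le> real ((2*s - 1) choose s)"
proof -
  have "(4::real) ^ s = (2 ^ s) ^ 2"
    by (simp add: power2_eq_square flip: power_mult_distrib)
  then have "x powr (2 * a) \<le> 4 ^ s"
    using power_mono[OF assms(3), of 2] assms(2) powr_power[of x a 2] by (simp add: mult.commute)
  then have "x powr (2 * a) / (4 * b) \<le> 4 ^ s / (4 * real s)"
    using assms(1,4) by (intro frac_le) simp_all
  also have "\<dots> \<le> real ((2*s - 1) choose s)"
    by (rule binomial_pred_central_lower_bound) (use assms(1) in simp)
  finally show ?thesis .
qed

lemma one_minus_power_le_exp:
  fixes q :: real
  assumes "0 \<le> q" "q \<le> 1"
  shows "(1 - q) ^ L \<le> exp (- (real L * q))"
proof -
  have "(1 - q) ^ L \<le> exp (- q) ^ L"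
    using assms exp_ge_add_one_self[of "- q"] by (intro power_mono) simp_all
  then show ?thesis
    by (simp add: exp_of_nat_mult[symmetric])
qed

lemma parameter_two_power_bounds:
  fixes \<epsilon> x :: real
  assumes \<epsilon>: "\<epsilon> > 0" and x: "x \<ge> 4"
  defines "s \<equiv> nat \<lceil>(1 + \<epsilon>/12) * log 2 x\<rceil>"
  shows "2 \<le> s" "x powr (1 + \<epsilon>/12) \<le> 2 ^ s" "2 ^ s \<le> 2 * x powr (1 + \<epsilon>/12)"
    "real s \<le> (1 + \<epsilon>/12) * log 2 x + 1"
proof -
  have "log 2 4 \<le> log 2 x"
    using x by simp
  moreover have "log 2 (4::real) = 2"
    using log_pow_cancel[of 2 2] by simp
  ultimately have "2 \<le> log 2 x"
    by simp
  then have "2 \<le> (1 + \<epsilon>/12) * log 2 x"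
    using mult_mono[of 1 "1 + \<epsilon>/12" 2 "log 2 x"] \<epsilon> by simp
  moreover note two_power_nat_ceiling_log_bounds[of x "1 + \<epsilon>/12", folded s_def]
  ultimately show "x powr (1 + \<epsilon>/12) \<le> 2 ^ s" "2 ^ s \<le> 2 * x powr (1 + \<epsilon>/12)"
    "real s \<le> (1 + \<epsilon>/12) * log 2 x + 1" "2 \<le> s"
    using x by simp_all
qed

lemma parameter_bounds:
  fixes \<epsilon> x :: real
  assumes \<epsilon>: "\<epsilon> > 0" and x: "x \<ge> 4" and big: "16 \<le> x powr (\<epsilon>/2)"
    and tail: "2048 * x powr (14 + \<epsilon>) * exp (- (x powr (\<epsilon>/6)) / (4 * ((1 + \<epsilon>/12) * log 2 x + 1))) < 1"
  defines "s \<equiv> nat \<lceil>(1 + \<epsilon>/12) * log 2 x\<rceil>"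
  shows "2 \<le> s" "real ((6*s - 1) choose (3*s)) \<le> 2 * x powr (6 + \<epsilon>)"
    "2 * real ((6*s - 1) choose (3*s)) ^ 2 * x ^ 2 * (1 - 1 / x ^ 2) ^ ((2*s - 1) choose s) < 1"
proof -
  define a where "a = 1 + \<epsilon>/12"
  note pow = parameter_two_power_bounds[OF \<epsilon> x, folded s_def a_def]
  show "2 \<le> s"
    by (fact pow(1))
  define N where "N = real ((6*s - 1) choose (3*s))"
  have "N \<le> (2 * x powr a) ^ 6 / 2"
    unfolding N_def using binomial_six_three_le[OF _ pow(3)] pow(1) by simp
  also have "\<dots> = 32 * x powr (6 + \<epsilon>/2)"
    using x powr_power[of x a 6] by (simp add: power_mult_distrib a_def algebra_simps)
  finally have N: "N \<le> 32 * x powr (6 + \<epsilon>/2)" .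
  also have "\<dots> \<le> 2 * x powr 6 * (x powr (\<epsilon>/2) * x powr (\<epsilon>/2))"
    using mult_right_mono[OF big, of "x powr 6 * x powr (\<epsilon>/2)"] by (simp add: powr_add mult_ac)
  also have "\<dots> = 2 * x powr (6 + \<epsilon>)"
    by (simp add: powr_add[symmetric])
  finally show "real ((6*s - 1) choose (3*s)) \<le> 2 * x powr (6 + \<epsilon>)"
    by (simp add: N_def)
  define L where "L = (2*s - 1) choose s"
  have "x powr (2 * a) / (4 * (a * log 2 x + 1)) / x ^ 2 \<le> real L / x ^ 2"
    unfolding L_def using binomial_pred_central_ge_powr[OF _ _ pow(2,4)] pow(1) x
    by (intro divide_right_mono) simp_all
  moreover have "x powr (2 * a) = x powr (\<epsilon>/6) * x ^ 2"
    using x by (simp add: a_def algebra_simps powr_add powr_numeral)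
  ultimately have L: "x powr (\<epsilon>/6) / (4 * (a * log 2 x + 1)) \<le> real L * (1 / x ^ 2)"
    using x by simp
  have "1 \<le> x ^ 2"
    using x by (simp add: one_le_power)
  then have "(1 - 1 / x ^ 2) ^ L \<le> exp (- (real L * (1 / x ^ 2)))"
    by (intro one_minus_power_le_exp) (simp_all add: divide_le_eq_1)
  also have "\<dots> \<le> exp (- (x powr (\<epsilon>/6)) / (4 * (a * log 2 x + 1)))"
    using L by simp
  finally have E: "(1 - 1 / x ^ 2) ^ L \<le> exp (- (x powr (\<epsilon>/6)) / (4 * (a * log 2 x + 1)))" .
  have "2 * N ^ 2 * x ^ 2 * (1 - 1 / x ^ 2) ^ L
      \<le> 2 * (32 * x powr (6 + \<epsilon>/2)) ^ 2 * x ^ 2 * exp (- (x powr (\<epsilon>/6)) / (4 * (a * log 2 x + 1)))"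
    using N E x by (intro mult_mono power_mono) (simp_all add: N_def field_simps)
  also have "\<dots> = 2048 * x powr (14 + \<epsilon>) * exp (- (x powr (\<epsilon>/6)) / (4 * (a * log 2 x + 1)))"
  proof -
    have "(x powr (6 + \<epsilon>/2)) ^ 2 = x powr (12 + \<epsilon>)"
      using x powr_power[of x "6 + \<epsilon>/2" 2] by (simp add: algebra_simps)
    moreover have "x ^ 2 = x powr 2"
      using x by (simp add: powr_numeral)
    moreover have "x powr (14 + \<epsilon>) = x powr (12 + \<epsilon>) * x powr 2"
      by (simp add: powr_add[symmetric])
    ultimately show ?thesis
      by (simp add: power_mult_distrib)
  qed
  also have "\<dots> < 1"
    using tail by (simp add: a_def)
  finally show "2 * real ((6*s - 1) choose (3*s)) ^ 2 * x ^ 2 * (1 - 1 / x ^ 2) ^ ((2*s - 1) choose s) < 1"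
    by (simp add: N_def L_def)
qed

lemma eventually_parameter_exists:
  fixes \<epsilon> :: real
  assumes "\<epsilon> > 0"
  shows "eventually (\<lambda>n. \<exists>s\<ge>2. real ((6*s - 1) choose (3*s)) \<le> 2 * real n powr (6 + \<epsilon>) \<and>
    2 * real ((6*s - 1) choose (3*s)) ^ 2 * real n ^ 2 * (1 - 1 / real n ^ 2) ^ ((2*s - 1) choose s) < 1)
    sequentially"
proof -
  have "eventually (\<lambda>x::real. 16 \<le> x powr (\<epsilon>/2)) at_top"
    using assms by real_asymp
  moreover have "eventually (\<lambda>x::real.
      2048 * x powr (14 + \<epsilon>) * exp (- (x powr (\<epsilon>/6)) / (4 * ((1 + \<epsilon>/12) * log 2 x + 1))) < 1) at_top"
    using assms by real_asymp
  ultimately have "eventually (\<lambda>x::real. 4 \<le> x \<and> 16 \<le> x powr (\<epsilon>/2) \<and>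
      2048 * x powr (14 + \<epsilon>) * exp (- (x powr (\<epsilon>/6)) / (4 * ((1 + \<epsilon>/12) * log 2 x + 1))) < 1) at_top"
    by (intro eventually_conj eventually_ge_at_top)
  from eventually_compose_filterlim[OF this filterlim_real_sequentially]
  show ?thesis
    by eventually_elim (use parameter_bounds[OF assms] in blast)
qed

lemma f_le_binomial:
  assumes "2 \<le> s" "1 \<le> n"
    and "2 * real ((6*s - 1) choose (3*s)) ^ 2 * real n ^ 2 * (1 - 1 / real n ^ 2) ^ ((2*s - 1) choose s) < 1"
  shows "f n \<le> enat ((6*s - 1) choose (3*s))"
  using good_colouring_exists[of s n] good_colouring.f_le_card_verts assms by (metis card_verts)

theorem mainTheorem3:
  shows "\<forall>\<epsilon>::real. \<epsilon> > 0 \<longrightarrow> (\<exists>n0::nat. \<forall>n\<ge>n0.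
           \<exists>k::nat. f n = enat k \<and> real k \<le> 2 * real n powr (6 + \<epsilon>))"
proof (intro allI impI)
  fix \<epsilon> :: real
  assume "\<epsilon> > 0"
  have "eventually (\<lambda>n. 1 \<le> n \<and> (\<exists>s\<ge>2. real ((6*s - 1) choose (3*s)) \<le> 2 * real n powr (6 + \<epsilon>) \<and>
    2 * real ((6*s - 1) choose (3*s)) ^ 2 * real n ^ 2 * (1 - 1 / real n ^ 2) ^ ((2*s - 1) choose s) < 1))
    sequentially"
    by (intro eventually_conj eventually_ge_at_top eventually_parameter_exists \<open>\<epsilon> > 0\<close>)
  then obtain n0 where n0: "\<And>n. n \<ge> n0 \<Longrightarrow> 1 \<le> n \<and> (\<exists>s\<ge>2. real ((6*s - 1) choose (3*s)) \<le> 2 * real n powr (6 + \<epsilon>) \<and>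
    2 * real ((6*s - 1) choose (3*s)) ^ 2 * real n ^ 2 * (1 - 1 / real n ^ 2) ^ ((2*s - 1) choose s) < 1)"
    by (auto simp: eventually_sequentially)
  have "\<exists>k. f n = enat k \<and> real k \<le> 2 * real n powr (6 + \<epsilon>)" if n: "n \<ge> n0" for n
  proof -
    obtain s where "1 \<le> n" "2 \<le> s" and size: "real ((6*s - 1) choose (3*s)) \<le> 2 * real n powr (6 + \<epsilon>)"
      and small: "2 * real ((6*s - 1) choose (3*s)) ^ 2 * real n ^ 2 * (1 - 1 / real n ^ 2) ^ ((2*s - 1) choose s) < 1"
      using n0[OF n] by blast
    then have "f n \<le> enat ((6*s - 1) choose (3*s))"
      by (intro f_le_binomial)
    then show ?thesis
      using size by (cases "f n") auto
  qed
  then show "\<exists>n0. \<forall>n\<ge>n0. \<exists>k. f n = enat k \<and> real k \<le> 2 * real n powr (6 + \<epsilon>)"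
    by blast
qed

end
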